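(* Consider the system of interacting Bernoulli processes $\{(X_{t,h})_{t\geq1}: h\in\mathcal H\}$ defined in the context, with $\mathcal H$ a finite set of $N$ elements, parameters $\theta_h>0$, $c\geq\theta_h$, and interaction matrix $\Gamma=(\gamma_{j,h})_{j,h\in\mathcal H}$ satisfying: (A1) $\Gamma$ is non-negative and $\sum_{j\in\mathcal H}\gamma_{j,h}\le 1$ for each $h$; (A2) $\Gamma$ is irreducible. Let $\mathbf Y_n=(Y_{n,k})_{k\in\mathcal H}$, $n\ge1$, be random vectors such that exactly one component of $\mathbf Y_n$ equals $1$ and the others equal $0$, and assume (A3): $\mathbf Y_n$ is independent of $\mathbf X_n=(X_{n,h})_{h\in\mathcal H}$ and of all the past up to time $n-1$, with $P(Y_{n,k}=1)=\pi_k\in(0,1)$, $\sum_{k\in\mathcal H}\pi_k=1$. Set $S_{t,k,h}=\sum_{n=1}^t X_{n,h}Y_{n,k}$. Denote by $\gamma^*\in(0,1]$ the Perron–Frobenius eigenvalue of $\Gamma$ and let $S_{\infty,h}$ be the almost sure limit of $S_{t,h}/t^{\gamma^*}$ (a finite strictly positive random variable), where $S_{t,h}=\sum_{n=1}^tX_{n,h}$. Then, for each pair $h,k\in\mathcal H$, $$\frac{S_{t,k,h}}{t^{\gamma^*}}\longrightarrow \pi_kS_{\infty,h}\quad\text{almost surely},$$ and hence $S_{t,k,h}/S_{t,j,h}\to\pi_k/\pi_j$ almost surely for all $k,j,h\in\mathcal H$.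
   Context: Model: For $t\geq 0$, given the past up to time $t$, the random variables $X_{t+1,h}\in\{0,1\}$, $h\in\mathcal H$, are conditionally independent with $$P(X_{t+1,h}=1\mid \text{past up to } t)=\frac{\theta_h+\sum_{j\in\mathcal H}\gamma_{j,h}S_{t,j}}{c+t},\qquad S_{t,j}=\sum_{n=1}^t X_{n,j}.$$ Irreducibility of $\Gamma$ means the directed graph with weighted adjacency matrix $\Gamma$ is strongly connected. (In the application, $Y_{n,k}=1$ indicates that item $n$ belongs to category $k$.) *)

theory Defs
  imports "HOL-Probability.Probability"
begin

definition is_eigenvalue :: "('h::finite \<Rightarrow> 'h \<Rightarrow> real) \<Rightarrow> complex \<Rightarrow> bool" where
  "is_eigenvalue G \<mu> \<longleftrightarrow>
     (\<exists>v :: 'h \<Rightarrow> complex. v \<noteq> (\<lambda>_. 0) \<and>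
        (\<forall>j. (\<Sum>h\<in>UNIV. complex_of_real (G j h) * v h) = \<mu> * v j))"

text \<open>Perron--Frobenius eigenvalue = spectral radius.\<close>
definition pf_eigenvalue :: "('h::finite \<Rightarrow> 'h \<Rightarrow> real) \<Rightarrow> real" where
  "pf_eigenvalue G = Max {cmod \<mu> | \<mu>. is_eigenvalue G \<mu>}"

text \<open>Irreducible: the directed graph with an edge j -> h iff G j h > 0 is strongly connected
  (every ordered pair, including j = h, joined by a nonempty path).\<close>
definition irreducible_mat :: "('h \<Rightarrow> 'h \<Rightarrow> real) \<Rightarrow> bool" where
  "irreducible_mat G \<longleftrightarrow> (\<forall>j h. (j, h) \<in> {(a, b). G a b > 0}\<^sup>+)"

definition past_event ::
  "'a measure \<Rightarrow> (nat \<Rightarrow> 'h \<Rightarrow> 'a \<Rightarrow> real) \<Rightarrow> (nat \<Rightarrow> 'h \<Rightarrow> 'a \<Rightarrow> real)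
   \<Rightarrow> nat \<Rightarrow> (nat \<Rightarrow> 'h \<Rightarrow> real) \<Rightarrow> (nat \<Rightarrow> 'h \<Rightarrow> real) \<Rightarrow> 'a set" where
  "past_event M X Y t xs ys =
     {\<omega> \<in> space M. \<forall>n\<in>{1..t}. \<forall>h. X n h \<omega> = xs n h \<and> Y n h \<omega> = ys n h}"

end

theory Submission
  imports Defs
begin

text \<open>
  Write \<open>S(t,k,h) = \<pi> k * S(t,h) + D(t)\<close> with \<open>D(t) = \<Sum>n\<le>t. X(n,h) * (Y(n,k) - \<pi> k)\<close>.
  By (A3), \<open>Y(n,\<cdot>)\<close> is independent of \<open>X(n,\<cdot>)\<close> and of the past, so the increments of \<open>D\<close>
  are orthogonal, and \<open>D\<close> stopped when \<open>S(\<cdot>,h)\<close> first exceeds \<open>m\<close> has second moment at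
  most \<open>m\<close>. Chebyshev's inequality for \<open>m = q\<^sup>2\<close> and Borel--Cantelli show that almost surely,
  for all large \<open>q\<close>, this stopped sum is at most \<open>\<epsilon> q\<^sup>2\<close> at arbitrarily late times;
  interpolating between consecutive squares then gives \<open>D(t) / S(t,h) \<longrightarrow> 0\<close> as soon as
  \<open>S(t,h) \<longrightarrow> \<infinity>\<close>. The latter holds almost surely because
  \<open>P(X(t+1,h) = 0 | past) \<le> 1 - \<theta> h / (c + t)\<close> and these bounds have a divergent sum.
  Dividing by \<open>t powr \<gamma>\<^sup>*\<close> gives the first claim; the ratio claim follows because
  \<open>S\<^sub>\<infinity>(h) > 0\<close>.
\<close>

lemma prod_one_minus_le_exp_neg_sum:
  fixes a :: "nat \<Rightarrow> real"
  assumes "\<And>i. 0 \<le> a i" "\<And>i. a i \<le> 1"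
  shows "(\<Prod>i<m. 1 - a i) \<le> exp (- (\<Sum>i<m. a i))"
proof -
  have "(\<Prod>i<m. 1 - a i) \<le> (\<Prod>i<m. exp (- a i))"
    using assms exp_ge_add_one_self[of "- a _"] by (intro prod_mono) auto
  also have "\<dots> = exp (- (\<Sum>i<m. a i))"
    by (simp add: exp_sum[symmetric] sum_negf)
  finally show ?thesis .
qed

lemma prod_one_minus_tendsto_0:
  fixes a :: "nat \<Rightarrow> real"
  assumes "\<And>i. 0 \<le> a i" "\<And>i. a i \<le> 1"
    and diverges: "filterlim (\<lambda>m. \<Sum>i<m. a i) at_top sequentially"
  shows "(\<lambda>m. \<Prod>i<m. 1 - a i) \<longlonglongrightarrow> 0"
proof (rule tendsto_sandwich[OF _ _ tendsto_const])
  show "\<forall>\<^sub>F m in sequentially. 0 \<le> (\<Prod>i<m. 1 - a i)"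
    by (rule always_eventually) (use assms in \<open>auto intro!: prod_nonneg\<close>)
  show "\<forall>\<^sub>F m in sequentially. (\<Prod>i<m. 1 - a i) \<le> exp (- (\<Sum>i<m. a i))"
    using prod_one_minus_le_exp_neg_sum assms by auto
  have "filterlim (\<lambda>m. - (\<Sum>i<m. a i)) at_bot sequentially"
    by (simp add: filterlim_uminus_at_bot diverges)
  then show "(\<lambda>m. exp (- (\<Sum>i<m. a i))) \<longlonglongrightarrow> 0"
    by (rule filterlim_compose[OF exp_at_bot])
qed

lemma sum_shifted_inverse_at_top:
  fixes b d :: real
  assumes "0 < b" "0 < d"
  shows "filterlim (\<lambda>m. \<Sum>i<m. b / (d + real i)) at_top sequentially"
proof (rule filterlim_at_top_mono)
  show "filterlim (\<lambda>m. b / (d + 1) * harm m) at_top sequentially"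
    using assms by (intro filterlim_tendsto_pos_mult_at_top[OF tendsto_const _ harm_at_top]) auto
  have "b / (d + 1) * inverse (real (Suc i)) \<le> b / (d + real i)" for i
  proof -
    have "d + real i \<le> (d + 1) * real (Suc i)"
      using assms by (simp add: algebra_simps)
    then have "b / ((d + 1) * real (Suc i)) \<le> b / (d + real i)"
      using assms by (intro divide_left_mono) auto
    then show ?thesis
      by (simp add: divide_inverse)
  qed
  then have "b / (d + 1) * harm m \<le> (\<Sum>i<m. b / (d + real i))" for m
    unfolding harm_altdef sum_distrib_left by (rule sum_mono)
  then show "\<forall>\<^sub>F m in sequentially. b / (d + 1) * harm m \<le> (\<Sum>i<m. b / (d + real i))"
    by simp
qed

lemma floor_sqrt_bounds:
  fixes S :: real
  assumes "0 \<le> S"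
  shows "real ((nat \<lfloor>sqrt S\<rfloor>)\<^sup>2) \<le> S" and "S - real ((nat \<lfloor>sqrt S\<rfloor>)\<^sup>2) \<le> 2 * sqrt S"
proof -
  define r q where "r = sqrt S" and "q = nat \<lfloor>r\<rfloor>"
  have r: "0 \<le> r" "r\<^sup>2 = S"
    using assms by (simp_all add: r_def)
  have q: "real q \<le> r" "r < real q + 1"
    using r by (simp_all add: q_def)
  have "(real q)\<^sup>2 \<le> r\<^sup>2"
    using q r by (intro power_mono) auto
  then show "real ((nat \<lfloor>sqrt S\<rfloor>)\<^sup>2) \<le> S"
    using r by (simp add: q_def r_def)
  have "S - (real q)\<^sup>2 = (r - real q) * (r + real q)"
    using r by (simp add: power2_eq_square algebra_simps)
  also have "\<dots> \<le> 1 * (2 * r)"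
    using q r by (intro mult_mono) auto
  finally show "S - real ((nat \<lfloor>sqrt S\<rfloor>)\<^sup>2) \<le> 2 * sqrt S"
    by (simp add: q_def r_def)
qed

lemma linear_plus_sqrt_less:
  fixes e S :: real
  assumes "0 < e" "(4 / e)\<^sup>2 < S"
  shows "e / 2 * S + 2 * sqrt S < e * S"
proof -
  have "0 < S"
    by (rule le_less_trans[OF zero_le_power2 assms(2)])
  have "4 / e < sqrt S"
    using real_sqrt_less_mono[OF assms(2)] assms(1) by simp
  then have "4 < e * sqrt S"
    using assms(1) by (simp add: field_simps)
  then have "4 * sqrt S < e * sqrt S * sqrt S"
    using \<open>0 < S\<close> by (intro mult_strict_right_mono) auto
  moreover have "e * sqrt S * sqrt S = e * S"
    using \<open>0 < S\<close> by (simp add: mult.assoc)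
  ultimately show ?thesis
    by linarith
qed

lemma tendsto_ratio_of_normalized:
  fixes A B a :: "nat \<Rightarrow> real"
  assumes "(\<lambda>t. A t / a t) \<longlonglongrightarrow> \<alpha>" "(\<lambda>t. B t / a t) \<longlonglongrightarrow> \<beta>" "\<beta> \<noteq> 0"
    and "\<forall>\<^sub>F t in sequentially. a t \<noteq> 0"
  shows "(\<lambda>t. A t / B t) \<longlonglongrightarrow> \<alpha> / \<beta>"
proof -
  have "(\<lambda>t. (A t / a t) / (B t / a t)) \<longlonglongrightarrow> \<alpha> / \<beta>"
    using assms(1-3) by (rule tendsto_divide)
  moreover have "\<forall>\<^sub>F t in sequentially. (A t / a t) / (B t / a t) = A t / B t"
    using assms(4) by eventually_elim simp
  ultimately show ?thesis
    by (rule Lim_transform_eventually)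
qed

lemma tendsto_multiple_plus_negligible:
  fixes D S a :: "nat \<Rightarrow> real"
  assumes "(\<lambda>t. D t / S t) \<longlonglongrightarrow> 0" "(\<lambda>t. S t / a t) \<longlonglongrightarrow> L"
    and "\<forall>\<^sub>F t in sequentially. S t \<noteq> 0"
  shows "(\<lambda>t. (p * S t + D t) / a t) \<longlonglongrightarrow> p * L"
proof -
  have "(\<lambda>t. p * (S t / a t) + D t / S t * (S t / a t)) \<longlonglongrightarrow> p * L + 0 * L"
    using assms(1,2) by (intro tendsto_intros)
  moreover have "\<forall>\<^sub>F t in sequentially. p * (S t / a t) + D t / S t * (S t / a t) = (p * S t + D t) / a t"
    using assms(3) by eventually_elim (simp add: add_divide_distrib)
  ultimately show ?thesis
    by (simp add: Lim_transform_eventually)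
qed

section \<open>Random variables with finitely many values\<close>

context finite_measure
begin

lemma integrable_simple_function_real:
  fixes f :: "'a \<Rightarrow> real"
  assumes "simple_function M f"
  shows "integrable M f"
  by (rule integrable.intros, rule has_bochner_integral_simple_bochner_integrable,
      rule simple_bochner_integrable.intros) (use assms emeasure_finite in auto)

lemma integral_simple_function_mult_indicator:
  fixes g :: "'b \<Rightarrow> real"
  assumes H: "simple_function M H" and V: "finite V" "H ` space M \<subseteq> V" and C: "C \<in> sets M"
  shows "(\<integral>\<omega>. g (H \<omega>) * indicator C \<omega> \<partial>M) = (\<Sum>v\<in>V. g v * measure M ({\<omega>\<in>space M. H \<omega> = v} \<inter> C))"
proof -
  have level: "{\<omega>\<in>space M. H \<omega> = v} \<in> sets M" for v
    using simple_functionD(2)[OF H, of "{v}"] by (simp add: vimage_def Int_def conj_commute)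
  have "g (H \<omega>) * indicator C \<omega> = (\<Sum>v\<in>V. g v * indicator ({\<omega>\<in>space M. H \<omega> = v} \<inter> C) \<omega>)"
    if \<omega>: "\<omega> \<in> space M" for \<omega>
  proof -
    have "(\<Sum>v\<in>V. g v * indicator ({\<omega>\<in>space M. H \<omega> = v} \<inter> C) \<omega>) =
        (\<Sum>v\<in>{H \<omega>}. g v * indicator ({\<omega>\<in>space M. H \<omega> = v} \<inter> C) \<omega>)"
      using \<omega> V by (intro sum.mono_neutral_right) (auto simp: indicator_def)
    then show ?thesis
      using \<omega> by (simp add: indicator_def)
  qed
  then have "(\<integral>\<omega>. g (H \<omega>) * indicator C \<omega> \<partial>M) =
      (\<integral>\<omega>. (\<Sum>v\<in>V. g v * indicator ({\<omega>\<in>space M. H \<omega> = v} \<inter> C) \<omega>) \<partial>M)"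
    by (intro Bochner_Integration.integral_cong) auto
  also have "\<dots> = (\<Sum>v\<in>V. g v * measure M ({\<omega>\<in>space M. H \<omega> = v} \<inter> C))"
    using level C emeasure_finite
    by (subst Bochner_Integration.integral_sum) (auto simp: less_top[symmetric])
  finally show ?thesis .
qed

lemma measure_simple_function_Collect:
  assumes H: "simple_function M H" and V: "finite V" "H ` space M \<subseteq> V" and C: "C \<in> sets M"
  shows "measure M ({\<omega>\<in>space M. P (H \<omega>)} \<inter> C) = (\<Sum>v\<in>{v\<in>V. P v}. measure M ({\<omega>\<in>space M. H \<omega> = v} \<inter> C))"
proof -
  have "{\<omega>\<in>space M. P (H \<omega>)} \<in> sets M"
    using simple_functionD(2)[OF H, of "Collect P"] by (simp add: vimage_def Int_def conj_commute)
  then have "measure M ({\<omega>\<in>space M. P (H \<omega>)} \<inter> C) = (\<integral>\<omega>. indicator ({\<omega>\<in>space M. P (H \<omega>)} \<inter> C) \<omega> \<partial>M)"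
    using C by simp
  also have "\<dots> = (\<integral>\<omega>. of_bool (P (H \<omega>)) * indicator C \<omega> \<partial>M)"
    by (intro Bochner_Integration.integral_cong) (auto simp: indicator_def)
  also have "\<dots> = (\<Sum>v\<in>V. of_bool (P v) * measure M ({\<omega>\<in>space M. H \<omega> = v} \<inter> C))"
    by (rule integral_simple_function_mult_indicator[OF assms])
  also have "\<dots> = (\<Sum>v\<in>{v\<in>V. P v}. measure M ({\<omega>\<in>space M. H \<omega> = v} \<inter> C))"
    using V by (simp add: sum.inter_filter[symmetric] if_distrib Int_def cong: if_cong)
  finally show ?thesis .
qed

end

section \<open>Stopped sums of 0/1 sequences\<close>

definition partial_sum :: "(nat \<Rightarrow> real) \<Rightarrow> nat \<Rightarrow> real" where
  "partial_sum x t = (\<Sum>n=1..t. x n)"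

definition truncated :: "(nat \<Rightarrow> real) \<Rightarrow> real \<Rightarrow> nat \<Rightarrow> real" where
  "truncated x m n = (if partial_sum x n \<le> m then x n else 0)"

definition stopped_sum :: "(nat \<Rightarrow> real) \<Rightarrow> (nat \<Rightarrow> real) \<Rightarrow> real \<Rightarrow> real \<Rightarrow> nat \<Rightarrow> real" where
  "stopped_sum x y p m T = (\<Sum>n=1..T. truncated x m n * (y n - p))"

lemma partial_sum_0 [simp]: "partial_sum x 0 = 0"
  by (simp add: partial_sum_def)

lemma partial_sum_Suc [simp]: "partial_sum x (Suc t) = partial_sum x t + x (Suc t)"
  by (simp add: partial_sum_def)

lemma stopped_sum_0 [simp]: "stopped_sum x y p m 0 = 0"
  by (simp add: stopped_sum_def)

lemma stopped_sum_Suc: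
  "stopped_sum x y p m (Suc T) = stopped_sum x y p m T + truncated x m (Suc T) * (y (Suc T) - p)"
  by (simp add: stopped_sum_def)

lemma truncated_cong:
  assumes "\<And>i. i \<in> {1..n} \<Longrightarrow> x i = x' i" "1 \<le> n"
  shows "truncated x m n = truncated x' m n"
  unfolding truncated_def partial_sum_def using assms by (auto intro!: sum.cong)

lemma stopped_sum_cong:
  assumes "\<And>i. i \<in> {1..T} \<Longrightarrow> x i = x' i" "\<And>i. i \<in> {1..T} \<Longrightarrow> y i = y' i"
  shows "stopped_sum x y p m T = stopped_sum x' y' p m T"
  unfolding stopped_sum_def using assms by (intro sum.cong refl arg_cong2[where f="(*)"] truncated_cong) auto

lemma partial_sum_mono:
  assumes "\<And>n. 0 \<le> x n" "t \<le> t'"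
  shows "partial_sum x t \<le> partial_sum x t'"
  unfolding partial_sum_def using assms by (intro sum_mono2) auto

lemma partial_sum_01_Nats:
  assumes "\<And>n. x n \<in> {0, 1}"
  shows "partial_sum x t \<in> \<nat>"
proof (induction t)
  case (Suc t)
  then show ?case
    using assms[of "Suc t"] by (auto intro: Nats_add)
qed simp

lemma sum_truncated_eq_min:
  assumes x: "\<And>n. x n \<in> {0, 1}" and m: "m \<in> \<nat>"
  shows "(\<Sum>n=1..T. truncated x m n) = min (partial_sum x T) m"
proof (induction T)
  case 0
  show ?case
    using m by (auto elim: Nats_cases)
next
  case (Suc T)
  obtain s where s: "partial_sum x T = real s"
    using Nats_cases[OF partial_sum_01_Nats[where x=x and t=T, OF x]] by blast
  obtain k where k: "m = real k"
    using m Nats_cases by blast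
  show ?case
    using Suc x[of "Suc T"] by (auto simp: truncated_def s k)
qed

lemma sum_deviation_eq_stopped_sum:
  assumes x: "\<And>n. x n \<in> {0, 1}" and "t \<le> T"
  shows "(\<Sum>n=1..t. x n * (y n - p)) = stopped_sum x y p (partial_sum x t) T"
proof -
  have x_nonneg: "\<And>n. 0 \<le> x n"
    using x by (metis insert_iff order_refl singletonD zero_le_one)
  have "stopped_sum x y p (partial_sum x t) (t + d) = (\<Sum>n=1..t. x n * (y n - p))" for d
  proof (induction d)
    case 0
    show ?case
      unfolding stopped_sum_def truncated_def using partial_sum_mono[of x, OF x_nonneg]
      by (intro sum.cong) auto
  next
    case (Suc d)
    have "truncated x (partial_sum x t) (Suc (t + d)) = 0"
      using x[of "Suc (t + d)"] partial_sum_mono[of x, OF x_nonneg, of t "t + d"]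
      by (auto simp: truncated_def)
    then show ?case
      using Suc by (simp add: stopped_sum_Suc)
  qed
  from this[of "T - t"] \<open>t \<le> T\<close> show ?thesis
    by simp
qed

lemma stopped_sum_diff_le:
  assumes x: "\<And>n. x n \<in> {0, 1}" and y: "\<And>n. y n \<in> {0, 1}" and p: "0 \<le> p" "p \<le> 1"
    and m: "m \<in> \<nat>" "m' \<in> \<nat>" "m' \<le> m"
  shows "\<bar>stopped_sum x y p m T - stopped_sum x y p m' T\<bar> \<le> m - m'"
proof -
  have "\<bar>stopped_sum x y p m T - stopped_sum x y p m' T\<bar>
      = \<bar>\<Sum>n=1..T. (truncated x m n - truncated x m' n) * (y n - p)\<bar>"
    unfolding stopped_sum_def by (simp add: sum_subtractf[symmetric] algebra_simps)
  also have "\<dots> \<le> (\<Sum>n=1..T. \<bar>(truncated x m n - truncated x m' n) * (y n - p)\<bar>)"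
    by (rule sum_abs)
  also have "\<dots> \<le> (\<Sum>n=1..T. truncated x m n - truncated x m' n)"
  proof (rule sum_mono)
    fix n
    have "\<bar>y n - p\<bar> \<le> 1"
      using y[of n] p by auto
    moreover have "0 \<le> truncated x m n - truncated x m' n"
      using x[of n] m by (auto simp: truncated_def)
    ultimately show "\<bar>(truncated x m n - truncated x m' n) * (y n - p)\<bar> \<le> truncated x m n - truncated x m' n"
      by (simp add: abs_mult mult_left_le)
  qed
  also have "\<dots> = min (partial_sum x T) m - min (partial_sum x T) m'"
    by (simp only: sum_subtractf sum_truncated_eq_min[where x=x, OF x m(1)]
        sum_truncated_eq_min[where x=x, OF x m(2)])
  also have "\<dots> \<le> m - m'"
    using m by linarith
  finally show ?thesis .
qed

lemma partial_sum_at_top: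
  assumes x: "\<And>n. x n \<in> {0, 1}" and freq: "\<exists>\<^sub>F n in sequentially. x n \<noteq> 0"
  shows "filterlim (partial_sum x) at_top sequentially"
proof -
  have x_nonneg: "\<And>n. 0 \<le> x n"
    using x by (metis insert_iff order_refl singletonD zero_le_one)
  have ex: "\<exists>t. real k \<le> partial_sum x t" for k
  proof (induction k)
    case 0
    show ?case
      by (rule exI[of _ 0]) simp
  next
    case (Suc k)
    then obtain t where t: "real k \<le> partial_sum x t"
      by blast
    obtain i where i: "Suc t \<le> i" "x i \<noteq> 0"
      using freq unfolding frequently_sequentially by blast
    then obtain i' where i': "i = Suc i'" "t \<le> i'"
      by (cases i) auto
    have "real (Suc k) \<le> partial_sum x t + x i"
      using t i x[of i] by auto
    also have "\<dots> \<le> partial_sum x i"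
      using partial_sum_mono[of x, OF x_nonneg i'(2)] i' by simp
    finally show ?case
      by blast
  qed
  show ?thesis
    unfolding filterlim_at_top
  proof (intro allI)
    fix Z :: real
    obtain k :: nat where "Z \<le> real k"
      using real_arch_simple by blast
    moreover obtain t where "real k \<le> partial_sum x t"
      using ex by blast
    ultimately have "\<forall>t'\<ge>t. Z \<le> partial_sum x t'"
      using partial_sum_mono[of x, OF x_nonneg] by (meson order_trans)
    then show "\<forall>\<^sub>F t in sequentially. Z \<le> partial_sum x t"
      unfolding eventually_sequentially by blast
  qed
qed

lemma abs_deviation_le_stopped_sum:
  assumes x: "\<And>n. x n \<in> {0, 1}" and y: "\<And>n. y n \<in> {0, 1}" and p: "0 \<le> p" "p \<le> 1"
    and "t \<le> T" and m: "m \<in> \<nat>" "m \<le> partial_sum x t"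
  shows "\<bar>\<Sum>n=1..t. x n * (y n - p)\<bar> \<le> \<bar>stopped_sum x y p m T\<bar> + (partial_sum x t - m)"
  using sum_deviation_eq_stopped_sum[where x=x and y=y and p=p, OF x \<open>t \<le> T\<close>]
    stopped_sum_diff_le[where x=x and y=y and T=T, OF x y p partial_sum_01_Nats[where x=x, OF x] m]
  by linarith

text \<open>Interpolation between consecutive squares: the stopped sums are controlled only along
  \<open>m = q\<^sup>2\<close>, and moving from \<open>q\<^sup>2\<close> to the actual count \<open>S \<le> (q + 1)\<^sup>2\<close> costs at most
  \<open>2 \<surd>S = o(S)\<close>.\<close>

lemma deviation_over_partial_sum_tendsto_0:
  assumes x: "\<And>n. x n \<in> {0, 1}" and y: "\<And>n. y n \<in> {0, 1}" and p: "0 \<le> p" "p \<le> 1"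
    and count: "filterlim (partial_sum x) at_top sequentially"
    and small: "\<And>\<epsilon>. \<epsilon> > 0 \<Longrightarrow> \<forall>\<^sub>F q in sequentially. \<exists>\<^sub>F T in sequentially.
                  \<bar>stopped_sum x y p (real ((Suc q)\<^sup>2)) T\<bar> \<le> \<epsilon> * real ((Suc q)\<^sup>2)"
  shows "(\<lambda>t. (\<Sum>n=1..t. x n * (y n - p)) / partial_sum x t) \<longlonglongrightarrow> 0"
proof (rule tendstoI)
  fix e :: real
  assume "e > 0"
  obtain K where K: "\<And>q. K \<le> q \<Longrightarrow> \<exists>\<^sub>F T in sequentially.
      \<bar>stopped_sum x y p (real ((Suc q)\<^sup>2)) T\<bar> \<le> e / 2 * real ((Suc q)\<^sup>2)"
    using small[of "e / 2"] \<open>e > 0\<close> by (auto simp: eventually_sequentially)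
  have "\<forall>\<^sub>F t in sequentially. max (real ((Suc K)\<^sup>2)) ((4 / e)\<^sup>2 + 1) \<le> partial_sum x t"
    using count unfolding filterlim_at_top by blast
  then show "\<forall>\<^sub>F t in sequentially. dist ((\<Sum>n=1..t. x n * (y n - p)) / partial_sum x t) 0 < e"
  proof eventually_elim
    case (elim t)
    define S where "S = partial_sum x t"
    define q where "q = nat \<lfloor>sqrt S\<rfloor>"
    have S: "real ((Suc K)\<^sup>2) \<le> S" "(4 / e)\<^sup>2 < S"
      using elim by (simp_all add: S_def)
    have "0 < S"
      by (rule le_less_trans[OF zero_le_power2 S(2)])
    have "real (Suc K) \<le> sqrt S"
      using real_sqrt_le_mono[OF S(1)] by simp
    then have "Suc K \<le> q"
      unfolding q_def by (simp add: le_nat_floor)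
    then obtain q' where q': "q = Suc q'" "K \<le> q'"
      by (cases q) auto
    obtain T where T: "t \<le> T" "\<bar>stopped_sum x y p (real (q\<^sup>2)) T\<bar> \<le> e / 2 * real (q\<^sup>2)"
      using K[OF q'(2)] unfolding frequently_sequentially q'(1) by blast
    have q2: "real (q\<^sup>2) \<le> S" "S - real (q\<^sup>2) \<le> 2 * sqrt S"
      using floor_sqrt_bounds \<open>0 < S\<close> by (simp_all add: q_def)
    have "\<bar>\<Sum>n=1..t. x n * (y n - p)\<bar> \<le> \<bar>stopped_sum x y p (real (q\<^sup>2)) T\<bar> + (S - real (q\<^sup>2))"
      unfolding S_def
      by (rule abs_deviation_le_stopped_sum[where x=x and y=y, OF x y p T(1) of_nat_in_Nats])
        (use q2(1) in \<open>simp add: S_def\<close>)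
    then have "\<bar>\<Sum>n=1..t. x n * (y n - p)\<bar> \<le> e / 2 * S + 2 * sqrt S"
      using T(2) q2 \<open>e > 0\<close> mult_left_mono[OF q2(1), of "e / 2"] by linarith
    also have "\<dots> < e * S"
      using linear_plus_sqrt_less[OF \<open>e > 0\<close> S(2)] .
    finally have "\<bar>\<Sum>n=1..t. x n * (y n - p)\<bar> / S < e"
      using \<open>0 < S\<close> by (simp add: pos_divide_less_eq)
    then show ?case
      using \<open>0 < S\<close> by (simp add: S_def dist_real_def abs_divide)
  qed
qed

section \<open>Interacting Bernoulli processes\<close>

lemma sum_prod_bernoulli_coordinate_0:
  fixes q :: "'h::finite \<Rightarrow> real"
  shows "(\<Sum>x | (\<forall>h'. x h' \<in> {0, 1::real}) \<and> x h = 0. \<Prod>h'\<in>UNIV. if x h' = 1 then q h' else 1 - q h') = 1 - q h"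
proof -
  have "{x. (\<forall>h'. x h' \<in> {0, 1::real}) \<and> x h = 0} = PiE UNIV (\<lambda>h'. if h' = h then {0} else {0, 1})"
    by (auto simp: PiE_UNIV_domain Pi_def split: if_splits)
  moreover have "(\<Sum>x\<in>PiE UNIV (\<lambda>h'. if h' = h then {0} else {0, 1::real}). \<Prod>h'\<in>UNIV. if x h' = 1 then q h' else 1 - q h')
      = (\<Prod>h'\<in>UNIV. \<Sum>a\<in>(if h' = h then {0} else {0, 1::real}). if a = 1 then q h' else 1 - q h')"
    by (rule prod_sum_PiE[symmetric]) auto
  moreover have "\<dots> = (\<Prod>h'\<in>UNIV. if h' = h then 1 - q h else 1)"
    by (intro prod.cong) auto
  ultimately show ?thesis
    by (simp add: prod.delta)
qed

lemma finite_binary_vectors: "finite {x :: 'h::finite \<Rightarrow> real. \<forall>h. x h \<in> {0, 1}}"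
proof -
  have "{x :: 'h \<Rightarrow> real. \<forall>h. x h \<in> {0, 1}} = PiE UNIV (\<lambda>_. {0, 1})"
    by (auto simp: PiE_UNIV_domain)
  then show ?thesis
    by (simp add: finite_PiE)
qed

text \<open>The observed history \<open>(X\<^sub>1, \<dots>, X\<^sub>n; Y\<^sub>1, \<dots>, Y\<^sub>n\<^sub>')\<close>; the restriction makes it a
  random variable with finitely many values.\<close>

definition path_prefix ::
  "(nat \<Rightarrow> 'h \<Rightarrow> 'a \<Rightarrow> real) \<Rightarrow> (nat \<Rightarrow> 'h \<Rightarrow> 'a \<Rightarrow> real) \<Rightarrow> nat \<Rightarrow> nat \<Rightarrow> 'a
     \<Rightarrow> (nat \<Rightarrow> 'h \<Rightarrow> real) \<times> (nat \<Rightarrow> 'h \<Rightarrow> real)" where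
  "path_prefix X Y n n' \<omega> = (restrict (\<lambda>i h. X i h \<omega>) {1..n}, restrict (\<lambda>i h. Y i h \<omega>) {1..n'})"

lemma path_prefix_eq_iff:
  "path_prefix X Y n n' \<omega> = path_prefix X Y n n' \<omega>' \<longleftrightarrow>
     (\<forall>i\<in>{1..n}. \<forall>h. X i h \<omega> = X i h \<omega>') \<and> (\<forall>i\<in>{1..n'}. \<forall>h. Y i h \<omega> = Y i h \<omega>')"
  by (auto simp: path_prefix_def restrict_def fun_eq_iff)

lemmas simple_function_mult = simple_function_compose2[where h="(*)"]
lemmas simple_function_diff = simple_function_compose2[where h="(-)"]
lemmas simple_function_power2 = simple_function_compose1[where g="\<lambda>x. x\<^sup>2"]

text \<open>The row-sum bound of (A1), irreducibility (A2), \<open>\<Sum>\<^sub>k \<pi>\<^sub>k = 1\<close> and the one-hot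
  property of \<open>Y\<close> are not assumed here: they matter only for the existence and positivity of
  \<open>S\<^sub>\<infinity>\<close>, which the theorem takes as hypotheses.\<close>

locale interacting_bernoulli = prob_space M for M :: "'a measure" +
  fixes X Y :: "nat \<Rightarrow> 'h::finite \<Rightarrow> 'a \<Rightarrow> real"
    and \<theta> \<pi> :: "'h \<Rightarrow> real"
    and c :: real
    and \<Gamma> :: "'h \<Rightarrow> 'h \<Rightarrow> real"
  assumes theta_pos: "\<And>h. \<theta> h > 0"
    and c_ge: "\<And>h. c \<ge> \<theta> h"
    and A1_nonneg: "\<And>j h. \<Gamma> j h \<ge> 0"
    and X_meas: "\<And>n h. X n h \<in> borel_measurable M"
    and X_01: "\<And>n h \<omega>. \<omega> \<in> space M \<Longrightarrow> X n h \<omega> \<in> {0, 1}"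
    and Y_meas: "\<And>n k. Y n k \<in> borel_measurable M"
    and Y_01: "\<And>n k \<omega>. \<omega> \<in> space M \<Longrightarrow> Y n k \<omega> \<in> {0, 1}"
    and dynamics: "\<And>t xs ys x. (\<forall>h. x h \<in> {0, 1}) \<Longrightarrow>
         measure M (past_event M X Y t xs ys \<inter> {\<omega> \<in> space M. \<forall>h. X (Suc t) h \<omega> = x h})
         = measure M (past_event M X Y t xs ys) *
           (\<Prod>h\<in>UNIV. (let p = (\<theta> h + (\<Sum>j\<in>UNIV. \<Gamma> j h * (\<Sum>n=1..t. xs n j))) / (c + real t)
                         in if x h = 1 then p else 1 - p))"
    and A3_pi: "\<And>k. 0 < \<pi> k \<and> \<pi> k < 1"
    and A3_indep: "\<And>n xs ys x k. n \<ge> 1 \<Longrightarrow>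
         measure M (past_event M X Y (n - 1) xs ys \<inter> {\<omega> \<in> space M. \<forall>h. X n h \<omega> = x h}
                    \<inter> {\<omega> \<in> space M. Y n k \<omega> = 1})
         = \<pi> k * measure M (past_event M X Y (n - 1) xs ys \<inter> {\<omega> \<in> space M. \<forall>h. X n h \<omega> = x h})"
begin

lemmas [measurable] = X_meas Y_meas

lemma past_event_sets [measurable]: "past_event M X Y t xs ys \<in> sets M"
  unfolding past_event_def by measurable

lemma simple_function_path_prefix: "simple_function M (path_prefix X Y n n')"
  unfolding simple_function_def
proof (intro conjI ballI)
  have "path_prefix X Y n n' ` space M \<subseteq>
      (PiE {1..n} (\<lambda>_. {x. \<forall>h. x h \<in> {0, 1}})) \<times> (PiE {1..n'} (\<lambda>_. {x. \<forall>h. x h \<in> {0, 1}}))"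
    using X_01 Y_01 by (auto simp: path_prefix_def) blast+
  then show "finite (path_prefix X Y n n' ` space M)"
    by (rule finite_subset) (intro finite_cartesian_product finite_PiE finite_binary_vectors; simp)
  fix v assume "v \<in> path_prefix X Y n n' ` space M"
  then obtain \<omega> where v: "v = path_prefix X Y n n' \<omega>"
    by blast
  have "path_prefix X Y n n' -` {v} \<inter> space M =
      {\<omega>'\<in>space M. (\<forall>i\<in>{1..n}. \<forall>h. X i h \<omega>' = X i h \<omega>) \<and> (\<forall>i\<in>{1..n'}. \<forall>h. Y i h \<omega>' = Y i h \<omega>)}"
    by (auto simp: v path_prefix_eq_iff)
  also have "\<dots> \<in> sets M"
    by measurable
  finally show "path_prefix X Y n n' -` {v} \<inter> space M \<in> sets M" .
qed

lemma simple_function_X: "simple_function M (X n h)"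
  by (rule simple_function_borel_measurable[OF X_meas], rule finite_subset[of _ "{0, 1}"])
    (use X_01 in auto)

lemma simple_function_Y: "simple_function M (Y n k)"
  by (rule simple_function_borel_measurable[OF Y_meas], rule finite_subset[of _ "{0, 1}"])
    (use Y_01 in auto)

lemma simple_function_truncated: "simple_function M (\<lambda>\<omega>. truncated (\<lambda>n. X n h \<omega>) m t)"
  unfolding truncated_def partial_sum_def
  by (intro simple_function_compose2[where h="\<lambda>s x. if s \<le> m then x else 0"]
      simple_function_sum simple_function_X)

lemma simple_function_stopped_sum:
  "simple_function M (\<lambda>\<omega>. stopped_sum (\<lambda>n. X n h \<omega>) (\<lambda>n. Y n k \<omega>) p m T)"
  unfolding stopped_sum_def
  by (intro simple_function_sum simple_function_mult simple_function_diff simple_function_const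
      simple_function_truncated simple_function_Y)

text \<open>\<open>path_prefix X Y n (n - 1)\<close> is everything observed before \<open>Y\<^sub>n\<close>; by (A3) each of its
  finitely many atoms splits in the proportion \<open>\<pi> k\<close> according to \<open>Y n k\<close>.\<close>

lemma integral_path_prefix_mult_Y:
  fixes G :: "(nat \<Rightarrow> 'h \<Rightarrow> real) \<times> (nat \<Rightarrow> 'h \<Rightarrow> real) \<Rightarrow> real"
  assumes "n \<ge> 1"
  shows "(\<integral>\<omega>. G (path_prefix X Y n (n - 1) \<omega>) * Y n k \<omega> \<partial>M)
       = \<pi> k * (\<integral>\<omega>. G (path_prefix X Y n (n - 1) \<omega>) \<partial>M)"
proof -
  let ?H = "path_prefix X Y n (n - 1)"
  let ?C = "{\<omega>\<in>space M. Y n k \<omega> = 1}"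
  have H: "simple_function M ?H" "finite (?H ` space M)"
    using simple_function_path_prefix by (auto simp: simple_function_def)
  have C: "?C \<in> sets M"
    by measurable
  have atom: "measure M ({\<omega>\<in>space M. ?H \<omega> = v} \<inter> ?C) = \<pi> k * measure M ({\<omega>\<in>space M. ?H \<omega> = v} \<inter> space M)"
    if "v \<in> ?H ` space M" for v
  proof -
    from that obtain \<omega>\<^sub>0 where v: "v = ?H \<omega>\<^sub>0"
      by blast
    have "{\<omega>\<in>space M. ?H \<omega> = v} = past_event M X Y (n - 1) (\<lambda>i h. X i h \<omega>\<^sub>0) (\<lambda>i h. Y i h \<omega>\<^sub>0)
        \<inter> {\<omega>\<in>space M. \<forall>h. X n h \<omega> = X n h \<omega>\<^sub>0}"
      using \<open>n \<ge> 1\<close> unfolding v path_prefix_eq_iff past_event_def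
      by (cases n) (auto simp: atLeastAtMostSuc_conv)
    then show ?thesis
      using A3_indep[OF \<open>n \<ge> 1\<close>, of "\<lambda>i h. X i h \<omega>\<^sub>0" "\<lambda>i h. Y i h \<omega>\<^sub>0" "\<lambda>h. X n h \<omega>\<^sub>0" k]
      by (simp add: Int_assoc Int_absorb2 past_event_def)
  qed
  have "(\<integral>\<omega>. G (?H \<omega>) * Y n k \<omega> \<partial>M) = (\<integral>\<omega>. G (?H \<omega>) * indicator ?C \<omega> \<partial>M)"
    using Y_01 by (intro Bochner_Integration.integral_cong) (auto simp: indicator_def)
  also have "\<dots> = (\<Sum>v\<in>?H ` space M. G v * measure M ({\<omega>\<in>space M. ?H \<omega> = v} \<inter> ?C))"
    by (rule integral_simple_function_mult_indicator[OF H subset_refl C])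
  also have "\<dots> = (\<Sum>v\<in>?H ` space M. G v * (\<pi> k * measure M ({\<omega>\<in>space M. ?H \<omega> = v} \<inter> space M)))"
    by (intro sum.cong refl arg_cong2[where f="(*)"] atom)
  also have "\<dots> = \<pi> k * (\<Sum>v\<in>?H ` space M. G v * measure M ({\<omega>\<in>space M. ?H \<omega> = v} \<inter> space M))"
    by (simp add: sum_distrib_left mult.left_commute)
  also have "(\<Sum>v\<in>?H ` space M. G v * measure M ({\<omega>\<in>space M. ?H \<omega> = v} \<inter> space M))
      = (\<integral>\<omega>. G (?H \<omega>) * indicator (space M) \<omega> \<partial>M)"
    by (rule integral_simple_function_mult_indicator[OF H subset_refl sets.top, symmetric])
  also have "\<dots> = (\<integral>\<omega>. G (?H \<omega>) \<partial>M)"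
    by (intro Bochner_Integration.integral_cong) auto
  finally show ?thesis .
qed

abbreviation stopped_deviation :: "'h \<Rightarrow> 'h \<Rightarrow> real \<Rightarrow> nat \<Rightarrow> 'a \<Rightarrow> real" where
  "stopped_deviation h k m T \<omega> \<equiv> stopped_sum (\<lambda>n. X n h \<omega>) (\<lambda>n. Y n k \<omega>) (\<pi> k) m T"

lemma borel_measurable_stopped_deviation [measurable]:
  "(\<lambda>\<omega>. stopped_deviation h k m T \<omega>) \<in> borel_measurable M"
  by (rule borel_measurable_simple_function[OF simple_function_stopped_sum])

lemma second_moment_stopped_deviation_Suc:
  "(\<integral>\<omega>. (stopped_deviation h k m (Suc T) \<omega>)\<^sup>2 \<partial>M) =
     (\<integral>\<omega>. (stopped_deviation h k m T \<omega>)\<^sup>2 \<partial>M) +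
     (\<integral>\<omega>. (truncated (\<lambda>n. X n h \<omega>) m (Suc T) * (Y (Suc T) k \<omega> - \<pi> k))\<^sup>2 \<partial>M)"
proof -
  let ?W = "\<lambda>\<omega>. stopped_deviation h k m T \<omega>"
  let ?A = "\<lambda>\<omega>. truncated (\<lambda>n. X n h \<omega>) m (Suc T)"
  define G where "G = (\<lambda>(xs, ys). stopped_sum (\<lambda>n. xs n h) (\<lambda>n. ys n k) (\<pi> k) m T * truncated (\<lambda>n. xs n h) m (Suc T))"
  have "?W \<omega> * ?A \<omega> = G (path_prefix X Y (Suc T) T \<omega>)" for \<omega>
    unfolding G_def path_prefix_def
    by simp (intro arg_cong2[where f="(*)"] stopped_sum_cong truncated_cong; simp)
  then have orthogonal: "(\<integral>\<omega>. ?W \<omega> * ?A \<omega> * Y (Suc T) k \<omega> \<partial>M) = \<pi> k * (\<integral>\<omega>. ?W \<omega> * ?A \<omega> \<partial>M)"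
    using integral_path_prefix_mult_Y[of "Suc T" G k] by simp
  have "(stopped_deviation h k m (Suc T) \<omega>)\<^sup>2 = (?W \<omega>)\<^sup>2 + 2 * (?W \<omega> * ?A \<omega> * Y (Suc T) k \<omega>)
      - 2 * \<pi> k * (?W \<omega> * ?A \<omega>) + (?A \<omega> * (Y (Suc T) k \<omega> - \<pi> k))\<^sup>2" for \<omega>
    by (simp add: stopped_sum_Suc power2_eq_square algebra_simps)
  moreover have "integrable M (\<lambda>\<omega>. (?W \<omega>)\<^sup>2)" "integrable M (\<lambda>\<omega>. ?W \<omega> * ?A \<omega> * Y (Suc T) k \<omega>)"
    "integrable M (\<lambda>\<omega>. ?W \<omega> * ?A \<omega>)" "integrable M (\<lambda>\<omega>. (?A \<omega> * (Y (Suc T) k \<omega> - \<pi> k))\<^sup>2)"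
    by (intro integrable_simple_function_real simple_function_power2 simple_function_mult
        simple_function_diff simple_function_const simple_function_stopped_sum
        simple_function_truncated simple_function_Y)+
  ultimately show ?thesis
    using orthogonal by simp
qed

lemma second_moment_stopped_deviation_le:
  assumes m: "m \<in> \<nat>"
  shows "(\<integral>\<omega>. (stopped_deviation h k m T \<omega>)\<^sup>2 \<partial>M) \<le> m"
proof -
  have integrable_truncated: "integrable M (\<lambda>\<omega>. truncated (\<lambda>n. X n h \<omega>) m n)" for n
    by (intro integrable_simple_function_real simple_function_truncated)
  have "(\<integral>\<omega>. (stopped_deviation h k m T \<omega>)\<^sup>2 \<partial>M) \<le> (\<integral>\<omega>. (\<Sum>n=1..T. truncated (\<lambda>n. X n h \<omega>) m n) \<partial>M)"
  proof (induction T)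
    case (Suc T)
    have "(truncated (\<lambda>n. X n h \<omega>) m (Suc T) * (Y (Suc T) k \<omega> - \<pi> k))\<^sup>2 \<le> truncated (\<lambda>n. X n h \<omega>) m (Suc T)"
      if "\<omega> \<in> space M" for \<omega>
    proof -
      have "(Y (Suc T) k \<omega> - \<pi> k)\<^sup>2 \<le> 1"
        using Y_01[OF that, of "Suc T" k] A3_pi[of k] by (auto simp: abs_square_le_1)
      moreover have "truncated (\<lambda>n. X n h \<omega>) m (Suc T) \<in> {0, 1}"
        using X_01[OF that, of "Suc T" h] by (auto simp: truncated_def)
      ultimately show ?thesis
        by (auto simp: power_mult_distrib)
    qed
    then have "(\<integral>\<omega>. (truncated (\<lambda>n. X n h \<omega>) m (Suc T) * (Y (Suc T) k \<omega> - \<pi> k))\<^sup>2 \<partial>M)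
        \<le> (\<integral>\<omega>. truncated (\<lambda>n. X n h \<omega>) m (Suc T) \<partial>M)"
      by (intro integral_mono integrable_truncated integrable_simple_function_real simple_function_power2
          simple_function_mult simple_function_diff simple_function_const simple_function_truncated
          simple_function_Y)
    then show ?case
      using Suc integrable_truncated
      by (simp add: second_moment_stopped_deviation_Suc Bochner_Integration.integral_sum
          Bochner_Integration.integral_add)
  qed simp
  also have "\<dots> \<le> (\<integral>\<omega>. m \<partial>M)"
  proof (intro integral_mono)
    show "integrable M (\<lambda>\<omega>. \<Sum>n=1..T. truncated (\<lambda>n. X n h \<omega>) m n)"
      using integrable_truncated by simp
    show "(\<Sum>n=1..T. truncated (\<lambda>n. X n h \<omega>) m n) \<le> m" if "\<omega> \<in> space M" for \<omega>
      using sum_truncated_eq_min[where x="\<lambda>n. X n h \<omega>", OF X_01[OF that] m] by simp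
  qed simp
  also have "\<dots> = m"
    by (simp add: prob_space)
  finally show ?thesis .
qed

lemma prob_stopped_deviation_gt_le:
  assumes m: "m \<in> \<nat>" "m > 0" and "\<epsilon> > 0"
  shows "prob {\<omega>\<in>space M. \<epsilon> * m < \<bar>stopped_deviation h k m T \<omega>\<bar>} \<le> 1 / (\<epsilon>\<^sup>2 * m)"
proof -
  let ?W = "\<lambda>\<omega>. stopped_deviation h k m T \<omega>"
  have "prob {\<omega>\<in>space M. \<epsilon> * m < \<bar>?W \<omega>\<bar>} \<le> prob {\<omega>\<in>space M. (\<epsilon> * m)\<^sup>2 \<le> (?W \<omega>)\<^sup>2}"
  proof (rule finite_measure_mono)
    show "{\<omega>\<in>space M. (\<epsilon> * m)\<^sup>2 \<le> (?W \<omega>)\<^sup>2} \<in> sets M"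
      by measurable
    show "{\<omega>\<in>space M. \<epsilon> * m < \<bar>?W \<omega>\<bar>} \<subseteq> {\<omega>\<in>space M. (\<epsilon> * m)\<^sup>2 \<le> (?W \<omega>)\<^sup>2}"
      using m \<open>\<epsilon> > 0\<close> by (auto simp: abs_le_square_iff[symmetric])
  qed
  also have "\<dots> \<le> (\<integral>\<omega>. (?W \<omega>)\<^sup>2 \<partial>M) / (\<epsilon> * m)\<^sup>2"
    using m \<open>\<epsilon> > 0\<close>
    by (intro integral_Markov_inequality_measure[where A="space M"] integrable_simple_function_real
        simple_function_power2 simple_function_stopped_sum) auto
  also have "\<dots> \<le> m / (\<epsilon> * m)\<^sup>2"
    using second_moment_stopped_deviation_le[OF m(1)] by (intro divide_right_mono) auto
  also have "\<dots> = 1 / (\<epsilon>\<^sup>2 * m)"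
    using m by (simp add: power2_eq_square)
  finally show ?thesis .
qed

lemma prob_eventually_stopped_deviation_gt_le:
  assumes m: "m \<in> \<nat>" "m > 0" and "\<epsilon> > 0"
  shows "prob {\<omega>\<in>space M. \<forall>\<^sub>F T in sequentially. \<epsilon> * m < \<bar>stopped_deviation h k m T \<omega>\<bar>} \<le> 1 / (\<epsilon>\<^sup>2 * m)"
proof -
  define C where "C T\<^sub>0 = {\<omega>\<in>space M. \<forall>T\<ge>T\<^sub>0. \<epsilon> * m < \<bar>stopped_deviation h k m T \<omega>\<bar>}" for T\<^sub>0
  have C_sets: "C T\<^sub>0 \<in> sets M" for T\<^sub>0
    unfolding C_def by measurable
  have "prob (C T\<^sub>0) \<le> 1 / (\<epsilon>\<^sup>2 * m)" for T\<^sub>0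
  proof -
    have "prob (C T\<^sub>0) \<le> prob {\<omega>\<in>space M. \<epsilon> * m < \<bar>stopped_deviation h k m T\<^sub>0 \<omega>\<bar>}"
      by (rule finite_measure_mono) (auto simp: C_def)
    also have "\<dots> \<le> 1 / (\<epsilon>\<^sup>2 * m)"
      by (rule prob_stopped_deviation_gt_le[OF assms])
    finally show ?thesis .
  qed
  moreover have "(\<lambda>T\<^sub>0. prob (C T\<^sub>0)) \<longlonglongrightarrow> prob (\<Union>T\<^sub>0. C T\<^sub>0)"
    using C_sets by (intro finite_Lim_measure_incseq) (auto simp: incseq_def C_def)
  moreover have "{\<omega>\<in>space M. \<forall>\<^sub>F T in sequentially. \<epsilon> * m < \<bar>stopped_deviation h k m T \<omega>\<bar>} = (\<Union>T\<^sub>0. C T\<^sub>0)"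
    by (auto simp: C_def eventually_sequentially)
  ultimately show ?thesis
    by (auto intro: LIMSEQ_le_const2)
qed

text \<open>Borel--Cantelli along the thresholds \<open>m = (q + 1)\<^sup>2\<close>, whose Chebyshev bounds
  \<open>1 / (\<epsilon>\<^sup>2 m)\<close> are summable.\<close>

lemma AE_eventually_frequently_stopped_deviation_le:
  assumes "\<epsilon> > 0"
  shows "AE \<omega> in M. \<forall>\<^sub>F q in sequentially. \<exists>\<^sub>F T in sequentially.
           \<bar>stopped_deviation h k (real ((Suc q)\<^sup>2)) T \<omega>\<bar> \<le> \<epsilon> * real ((Suc q)\<^sup>2)"
proof -
  define E where "E q = {\<omega>\<in>space M. \<forall>\<^sub>F T in sequentially.
    \<epsilon> * real ((Suc q)\<^sup>2) < \<bar>stopped_deviation h k (real ((Suc q)\<^sup>2)) T \<omega>\<bar>}" for q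
  have E_sets: "E q \<in> sets M" for q
    unfolding E_def eventually_sequentially by measurable
  have "summable (\<lambda>q. prob (E q))"
  proof (rule summable_comparison_test')
    have "summable (\<lambda>q. inverse (real (Suc q) ^ 2))"
      using inverse_power_summable[of 2, where 'a=real] by (subst summable_Suc_iff) simp
    then show "summable (\<lambda>q. 1 / \<epsilon>\<^sup>2 * inverse (real (Suc q) ^ 2))"
      by (rule summable_mult)
    show "norm (prob (E q)) \<le> 1 / \<epsilon>\<^sup>2 * inverse (real (Suc q) ^ 2)" for q
      using prob_eventually_stopped_deviation_gt_le[OF of_nat_in_Nats _ \<open>\<epsilon> > 0\<close>, of "(Suc q)\<^sup>2" h k]
      by (simp add: E_def field_simps)
  qed
  then have "AE \<omega> in M. \<forall>\<^sub>F q in sequentially. \<omega> \<in> space M - E q"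
    using E_sets emeasure_finite by (intro borel_cantelli_AE1) (auto simp: less_top[symmetric])
  then show ?thesis
    by (rule AE_mp) (auto intro!: AE_I2 elim!: eventually_mono simp: E_def not_eventually not_less)
qed

lemma AE_stopped_deviation_small:
  "AE \<omega> in M. \<forall>\<epsilon>>0. \<forall>\<^sub>F q in sequentially. \<exists>\<^sub>F T in sequentially.
     \<bar>stopped_deviation h k (real ((Suc q)\<^sup>2)) T \<omega>\<bar> \<le> \<epsilon> * real ((Suc q)\<^sup>2)"
proof -
  have "AE \<omega> in M. \<forall>j::nat. \<forall>\<^sub>F q in sequentially. \<exists>\<^sub>F T in sequentially.
      \<bar>stopped_deviation h k (real ((Suc q)\<^sup>2)) T \<omega>\<bar> \<le> inverse (real (Suc j)) * real ((Suc q)\<^sup>2)"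
    by (subst AE_all_countable) (intro allI AE_eventually_frequently_stopped_deviation_le; simp)
  then show ?thesis
  proof eventually_elim
    case (elim \<omega>)
    show ?case
    proof (intro allI impI)
      fix \<epsilon> :: real
      assume "\<epsilon> > 0"
      then obtain j where j: "inverse (real (Suc j)) < \<epsilon>"
        using reals_Archimedean by blast
      show "\<forall>\<^sub>F q in sequentially. \<exists>\<^sub>F T in sequentially.
          \<bar>stopped_deviation h k (real ((Suc q)\<^sup>2)) T \<omega>\<bar> \<le> \<epsilon> * real ((Suc q)\<^sup>2)"
        using elim[rule_format, of j]
      proof (elim eventually_mono frequently_elim1)
        fix q T
        assume "\<bar>stopped_deviation h k (real ((Suc q)\<^sup>2)) T \<omega>\<bar> \<le> inverse (real (Suc j)) * real ((Suc q)\<^sup>2)"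
        also have "\<dots> \<le> \<epsilon> * real ((Suc q)\<^sup>2)"
          using j by (intro mult_right_mono) auto
        finally show "\<bar>stopped_deviation h k (real ((Suc q)\<^sup>2)) T \<omega>\<bar> \<le> \<epsilon> * real ((Suc q)\<^sup>2)" .
      qed
    qed
  qed
qed

lemma prob_past_event_next_X_zero_le:
  assumes xs: "\<And>i j. 0 \<le> xs i j"
  shows "prob (past_event M X Y t xs ys \<inter> {\<omega>\<in>space M. X (Suc t) h \<omega> = 0})
    \<le> (1 - \<theta> h / (c + real t)) * prob (past_event M X Y t xs ys)"
proof -
  let ?P = "past_event M X Y t xs ys"
  let ?B = "{x. (\<forall>h'. x h' \<in> {0, 1::real}) \<and> x h = 0}"
  let ?q = "\<lambda>h'. (\<theta> h' + (\<Sum>j\<in>UNIV. \<Gamma> j h' * (\<Sum>n=1..t. xs n j))) / (c + real t)"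
  have "simple_function M (\<lambda>\<omega>. fst (path_prefix X Y (Suc t) 0 \<omega>) (Suc t))"
    by (rule simple_function_compose1[OF simple_function_path_prefix])
  then have next_X: "simple_function M (\<lambda>\<omega> h'. X (Suc t) h' \<omega>)"
    by (simp add: path_prefix_def)
  have "prob (?P \<inter> {\<omega>\<in>space M. X (Suc t) h \<omega> = 0})
      = (\<Sum>x\<in>?B. prob ({\<omega>\<in>space M. (\<lambda>h'. X (Suc t) h' \<omega>) = x} \<inter> ?P))"
    using measure_simple_function_Collect[OF next_X finite_binary_vectors _ past_event_sets, where P="\<lambda>x. x h = 0"]
      X_01 by (simp only: mem_Collect_eq Int_commute) blast
  also have "\<dots> = (\<Sum>x\<in>?B. prob ?P * (\<Prod>h'\<in>UNIV. if x h' = 1 then ?q h' else 1 - ?q h'))"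
  proof (intro sum.cong refl)
    fix x
    assume "x \<in> ?B"
    moreover have "{\<omega>\<in>space M. (\<lambda>h'. X (Suc t) h' \<omega>) = x} \<inter> ?P = ?P \<inter> {\<omega>\<in>space M. \<forall>h'. X (Suc t) h' \<omega> = x h'}"
      by (auto simp: fun_eq_iff)
    ultimately show "prob ({\<omega>\<in>space M. (\<lambda>h'. X (Suc t) h' \<omega>) = x} \<inter> ?P)
        = prob ?P * (\<Prod>h'\<in>UNIV. if x h' = 1 then ?q h' else 1 - ?q h')"
      using dynamics[of x t xs ys] unfolding Let_def by simp
  qed
  also have "\<dots> = prob ?P * (1 - ?q h)"
    by (simp only: sum_distrib_left[symmetric] sum_prod_bernoulli_coordinate_0)
  also have "\<dots> \<le> prob ?P * (1 - \<theta> h / (c + real t))"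
  proof (intro mult_left_mono measure_nonneg)
    have "0 \<le> (\<Sum>j\<in>UNIV. \<Gamma> j h * (\<Sum>n=1..t. xs n j))"
      using A1_nonneg xs by (intro sum_nonneg mult_nonneg_nonneg) auto
    moreover have "0 < c + real t"
      using theta_pos[of h] c_ge[of h] by linarith
    ultimately show "1 - ?q h \<le> 1 - \<theta> h / (c + real t)"
      by (simp add: divide_right_mono)
  qed
  finally show ?thesis
    by (simp add: mult.commute)
qed

lemma prob_path_prefix_in_next_X_zero_le:
  "prob ({\<omega>\<in>space M. path_prefix X Y t t \<omega> \<in> U} \<inter> {\<omega>\<in>space M. X (Suc t) h \<omega> = 0})
    \<le> (1 - \<theta> h / (c + real t)) * prob {\<omega>\<in>space M. path_prefix X Y t t \<omega> \<in> U}"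
proof -
  let ?H = "path_prefix X Y t t"
  let ?Z = "{\<omega>\<in>space M. X (Suc t) h \<omega> = 0}"
  let ?r = "1 - \<theta> h / (c + real t)"
  have H: "simple_function M ?H" "finite (?H ` space M)"
    using simple_function_path_prefix by (auto simp: simple_function_def)
  have Z: "?Z \<in> sets M"
    by measurable
  have atom: "prob ({\<omega>\<in>space M. ?H \<omega> = v} \<inter> ?Z) \<le> ?r * prob ({\<omega>\<in>space M. ?H \<omega> = v} \<inter> space M)"
    if "v \<in> ?H ` space M" for v
  proof -
    from that obtain \<omega>\<^sub>0 where \<omega>\<^sub>0: "\<omega>\<^sub>0 \<in> space M" "v = ?H \<omega>\<^sub>0"
      by blast
    have "{\<omega>\<in>space M. ?H \<omega> = v} = past_event M X Y t (\<lambda>i h. X i h \<omega>\<^sub>0) (\<lambda>i h. Y i h \<omega>\<^sub>0)"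
      unfolding \<omega>\<^sub>0(2) path_prefix_eq_iff past_event_def by auto
    moreover have "0 \<le> X i j \<omega>\<^sub>0" for i j
      using X_01[OF \<omega>\<^sub>0(1), of i j] by auto
    ultimately show ?thesis
      using prob_past_event_next_X_zero_le[of "\<lambda>i h. X i h \<omega>\<^sub>0" t "\<lambda>i h. Y i h \<omega>\<^sub>0" h]
      by (simp add: Int_absorb2 past_event_def)
  qed
  have "prob ({\<omega>\<in>space M. ?H \<omega> \<in> U} \<inter> ?Z) = (\<Sum>v\<in>{v\<in>?H ` space M. v \<in> U}. prob ({\<omega>\<in>space M. ?H \<omega> = v} \<inter> ?Z))"
    by (rule measure_simple_function_Collect[OF H subset_refl Z])
  also have "\<dots> \<le> (\<Sum>v\<in>{v\<in>?H ` space M. v \<in> U}. ?r * prob ({\<omega>\<in>space M. ?H \<omega> = v} \<inter> space M))"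
    by (intro sum_mono atom) auto
  also have "\<dots> = ?r * (\<Sum>v\<in>{v\<in>?H ` space M. v \<in> U}. prob ({\<omega>\<in>space M. ?H \<omega> = v} \<inter> space M))"
    by (simp add: sum_distrib_left)
  also have "(\<Sum>v\<in>{v\<in>?H ` space M. v \<in> U}. prob ({\<omega>\<in>space M. ?H \<omega> = v} \<inter> space M))
      = prob ({\<omega>\<in>space M. ?H \<omega> \<in> U} \<inter> space M)"
    by (rule measure_simple_function_Collect[OF H subset_refl sets.top, symmetric])
  finally show ?thesis
    by (simp add: Int_absorb2)
qed

lemma prob_X_zero_on_window_le:
  "prob {\<omega>\<in>space M. \<forall>i\<in>{T<..T + m}. X i h \<omega> = 0} \<le> (\<Prod>i<m. 1 - \<theta> h / (c + real (T + i)))"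
proof (induction m)
  case (Suc m)
  let ?U = "{v. \<forall>i\<in>{T<..T + m}. fst v i h = 0}"
  have window: "{\<omega>\<in>space M. path_prefix X Y (T + m) (T + m) \<omega> \<in> ?U} = {\<omega>\<in>space M. \<forall>i\<in>{T<..T + m}. X i h \<omega> = 0}"
    by (auto simp: path_prefix_def)
  have "{\<omega>\<in>space M. \<forall>i\<in>{T<..T + Suc m}. X i h \<omega> = 0} =
      {\<omega>\<in>space M. path_prefix X Y (T + m) (T + m) \<omega> \<in> ?U} \<inter> {\<omega>\<in>space M. X (Suc (T + m)) h \<omega> = 0}"
    unfolding window by (auto simp: le_Suc_eq)
  then have "prob {\<omega>\<in>space M. \<forall>i\<in>{T<..T + Suc m}. X i h \<omega> = 0}
      \<le> (1 - \<theta> h / (c + real (T + m))) * prob {\<omega>\<in>space M. \<forall>i\<in>{T<..T + m}. X i h \<omega> = 0}"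
    using prob_path_prefix_in_next_X_zero_le[of "T + m" ?U h] window by simp
  also have "\<dots> \<le> (1 - \<theta> h / (c + real (T + m))) * (\<Prod>i<m. 1 - \<theta> h / (c + real (T + i)))"
    using Suc.IH theta_pos[of h] c_ge[of h] by (intro mult_left_mono) auto
  finally show ?case
    by (simp add: mult.commute)
qed simp

lemma AE_frequently_X_nonzero: "AE \<omega> in M. \<exists>\<^sub>F n in sequentially. X n h \<omega> \<noteq> 0"
proof -
  have "AE \<omega> in M. \<exists>i>T. X i h \<omega> \<noteq> 0" for T
  proof -
    let ?N = "{\<omega>\<in>space M. \<forall>i. T < i \<longrightarrow> X i h \<omega> = 0}"
    have N: "?N \<in> sets M"
      by measurable
    have "(\<lambda>m. \<Prod>i<m. 1 - \<theta> h / (c + real (T + i))) \<longlonglongrightarrow> 0"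
    proof (rule prod_one_minus_tendsto_0)
      show "0 \<le> \<theta> h / (c + real (T + i))" "\<theta> h / (c + real (T + i)) \<le> 1" for i
        using theta_pos[of h] c_ge[of h] by auto
      show "filterlim (\<lambda>m. \<Sum>i<m. \<theta> h / (c + real (T + i))) at_top sequentially"
        using sum_shifted_inverse_at_top[of "\<theta> h" "c + real T"] theta_pos[of h] c_ge[of h]
        by (simp add: add.assoc)
    qed
    moreover have "prob ?N \<le> (\<Prod>i<m. 1 - \<theta> h / (c + real (T + i)))" for m
    proof -
      have "prob ?N \<le> prob {\<omega>\<in>space M. \<forall>i\<in>{T<..T + m}. X i h \<omega> = 0}"
        by (rule finite_measure_mono) auto
      then show ?thesis
        using prob_X_zero_on_window_le[of T m h] by linarith
    qed
    ultimately have "prob ?N \<le> 0"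
      by (intro LIMSEQ_le_const) auto
    then have "emeasure M ?N = 0"
      by (simp add: emeasure_eq_measure measure_nonneg antisym)
    then show ?thesis
      by (subst AE_iff_measurable[OF N]) auto
  qed
  then have "AE \<omega> in M. \<forall>T. \<exists>i>T. X i h \<omega> \<noteq> 0"
    by (simp add: AE_all_countable)
  then show ?thesis
    by eventually_elim (auto simp: frequently_sequentially intro: less_imp_le)
qed

lemma AE_partial_sum_X_at_top: "AE \<omega> in M. filterlim (partial_sum (\<lambda>n. X n h \<omega>)) at_top sequentially"
  using AE_frequently_X_nonzero[of h] AE_space
  by eventually_elim (use X_01 in \<open>auto intro: partial_sum_at_top\<close>)

lemma AE_deviation_over_partial_sum_tendsto_0:
  "AE \<omega> in M. (\<lambda>t. (\<Sum>n=1..t. X n h \<omega> * (Y n k \<omega> - \<pi> k)) / partial_sum (\<lambda>n. X n h \<omega>) t) \<longlonglongrightarrow> 0"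
  using AE_partial_sum_X_at_top[of h] AE_stopped_deviation_small[of h k] AE_space
proof eventually_elim
  case (elim \<omega>)
  then show ?case
    using X_01 Y_01 A3_pi[of k] by (intro deviation_over_partial_sum_tendsto_0) (auto simp: less_imp_le)
qed

lemma AE_joint_count_tendsto:
  fixes a :: "nat \<Rightarrow> real"
  assumes "AE \<omega> in M. (\<lambda>t. (\<Sum>n=1..t. X n h \<omega>) / a t) \<longlonglongrightarrow> L \<omega>"
  shows "AE \<omega> in M. (\<lambda>t. (\<Sum>n=1..t. X n h \<omega> * Y n k \<omega>) / a t) \<longlonglongrightarrow> \<pi> k * L \<omega>"
  using assms AE_deviation_over_partial_sum_tendsto_0[of h k] AE_partial_sum_X_at_top[of h]
proof eventually_elim
  case (elim \<omega>)
  let ?S = "partial_sum (\<lambda>n. X n h \<omega>)"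
  have "\<forall>\<^sub>F t in sequentially. 1 \<le> ?S t"
    using elim(3) by (simp add: filterlim_at_top)
  then have "\<forall>\<^sub>F t in sequentially. ?S t \<noteq> 0"
    by eventually_elim auto
  moreover have "(\<lambda>t. ?S t / a t) \<longlonglongrightarrow> L \<omega>"
    using elim(1) by (simp add: partial_sum_def)
  moreover have "(\<Sum>n=1..t. X n h \<omega> * Y n k \<omega>) = \<pi> k * ?S t + (\<Sum>n=1..t. X n h \<omega> * (Y n k \<omega> - \<pi> k))" for t
    by (simp add: partial_sum_def sum_distrib_left sum.distrib[symmetric] algebra_simps)
  ultimately show ?case
    using tendsto_multiple_plus_negligible[OF elim(2)] by simp
qed

end

theorem theorem3:
  fixes M :: "'a measure"
    and X Y :: "nat \<Rightarrow> 'h::finite \<Rightarrow> 'a \<Rightarrow> real"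
    and \<theta> \<pi> :: "'h \<Rightarrow> real"
    and c :: real
    and \<Gamma> :: "'h \<Rightarrow> 'h \<Rightarrow> real"
    and Sinf :: "'h \<Rightarrow> 'a \<Rightarrow> real"
  assumes prob: "prob_space M"
    and theta_pos: "\<And>h. \<theta> h > 0"
    and c_ge: "\<And>h. c \<ge> \<theta> h"
    and A1_nonneg: "\<And>j h. \<Gamma> j h \<ge> 0"
    and A1_sum: "\<And>h. (\<Sum>j\<in>UNIV. \<Gamma> j h) \<le> 1"
    and A2: "irreducible_mat \<Gamma>"
    and X_meas: "\<And>n h. X n h \<in> borel_measurable M"
    and X_01: "\<And>n h \<omega>. \<omega> \<in> space M \<Longrightarrow> X n h \<omega> \<in> {0, 1}"
    and Y_meas: "\<And>n k. Y n k \<in> borel_measurable M"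
    and Y_01: "\<And>n k \<omega>. \<omega> \<in> space M \<Longrightarrow> Y n k \<omega> \<in> {0, 1}"
    and Y_onehot: "\<And>n \<omega>. n \<ge> 1 \<Longrightarrow> \<omega> \<in> space M \<Longrightarrow> (\<exists>!k. Y n k \<omega> = 1)"
    and dynamics: "\<And>t xs ys x. (\<forall>h. x h \<in> {0, 1}) \<Longrightarrow>
         measure M (past_event M X Y t xs ys \<inter> {\<omega> \<in> space M. \<forall>h. X (Suc t) h \<omega> = x h})
         = measure M (past_event M X Y t xs ys) *
           (\<Prod>h\<in>UNIV. (let p = (\<theta> h + (\<Sum>j\<in>UNIV. \<Gamma> j h * (\<Sum>n=1..t. xs n j))) / (c + real t)
                         in if x h = 1 then p else 1 - p))"
    and A3_pi: "\<And>k. 0 < \<pi> k \<and> \<pi> k < 1"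
    and A3_sum: "(\<Sum>k\<in>UNIV. \<pi> k) = 1"
    and A3_indep: "\<And>n xs ys x k. n \<ge> 1 \<Longrightarrow>
         measure M (past_event M X Y (n - 1) xs ys \<inter> {\<omega> \<in> space M. \<forall>h. X n h \<omega> = x h}
                    \<inter> {\<omega> \<in> space M. Y n k \<omega> = 1})
         = \<pi> k * measure M (past_event M X Y (n - 1) xs ys \<inter> {\<omega> \<in> space M. \<forall>h. X n h \<omega> = x h})"
    and Sinf_lim: "\<And>h. AE \<omega> in M.
         (\<lambda>t. (\<Sum>n=1..t. X n h \<omega>) / real t powr pf_eigenvalue \<Gamma>) \<longlonglongrightarrow> Sinf h \<omega>"
    and Sinf_pos: "\<And>h. AE \<omega> in M. Sinf h \<omega> > 0"
  shows "(\<forall>h k. AE \<omega> in M.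
            (\<lambda>t. (\<Sum>n=1..t. X n h \<omega> * Y n k \<omega>) / real t powr pf_eigenvalue \<Gamma>)
              \<longlonglongrightarrow> \<pi> k * Sinf h \<omega>)
       \<and> (\<forall>k j h. AE \<omega> in M.
            (\<lambda>t. (\<Sum>n=1..t. X n h \<omega> * Y n k \<omega>) / (\<Sum>n=1..t. X n h \<omega> * Y n j \<omega>))
              \<longlonglongrightarrow> \<pi> k / \<pi> j)"
proof -
  interpret interacting_bernoulli M X Y \<theta> \<pi> c \<Gamma>
    by (intro interacting_bernoulli.intro prob interacting_bernoulli_axioms.intro)
      (fact theta_pos c_ge A1_nonneg X_meas X_01 Y_meas Y_01 dynamics A3_pi A3_indep)+
  have count: "AE \<omega> in M. (\<lambda>t. (\<Sum>n=1..t. X n h \<omega> * Y n k \<omega>) / real t powr pf_eigenvalue \<Gamma>)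
      \<longlonglongrightarrow> \<pi> k * Sinf h \<omega>" for h k
    by (rule AE_joint_count_tendsto[OF Sinf_lim])
  have "AE \<omega> in M. (\<lambda>t. (\<Sum>n=1..t. X n h \<omega> * Y n k \<omega>) / (\<Sum>n=1..t. X n h \<omega> * Y n j \<omega>))
      \<longlonglongrightarrow> \<pi> k / \<pi> j" for k j h
    using count[of h k] count[of h j] Sinf_pos[of h]
  proof eventually_elim
    case (elim \<omega>)
    have "\<forall>\<^sub>F t in sequentially. real t powr pf_eigenvalue \<Gamma> \<noteq> 0"
      by (rule eventually_sequentiallyI[of 1]) simp
    with elim have "(\<lambda>t. (\<Sum>n=1..t. X n h \<omega> * Y n k \<omega>) / (\<Sum>n=1..t. X n h \<omega> * Y n j \<omega>))
        \<longlonglongrightarrow> \<pi> k * Sinf h \<omega> / (\<pi> j * Sinf h \<omega>)"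
      using A3_pi[of j] by (intro tendsto_ratio_of_normalized) auto
    then show ?case
      using elim(3) by simp
  qed
  with count show ?thesis
    by blast
qed

end
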